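(* Let $n\in\mathbb{N}$ with $n>500$, let $n_1,n_2,n_3,n_4$ be nonnegative integers with $\sum_{i=1}^4n_i=n$, and let $\lambda_i=\frac{n_i}{n}$ for $i=1,\dots,4$. Then \[ \frac{n!}{n_1!\,n_2!\,n_3!\,n_4!}\prod_{i=1}^4\lambda_i^{n_i}>\frac{1}{n^2}. \]
   Context: The convention $0^0=1$ is used. *)

theory Defs
  imports Complex_Main
begin

end

theory Submission
  imports Defs
begin

text \<open>
  Two-sided Stirling bounds \<open>sqrt m (m/e)^m \<le> m! \<le> e sqrt (m+1) (m/e)^m\<close> come from telescoping
  \<open>1 \<le> (m + 1/2) ln (1 + 1/m) \<le> 1 + 1/(4m) - 1/(4(m+1))\<close>. Applying the lower bound to \<open>n!\<close>
  and the upper bound to each \<open>n_i!\<close>, the powers \<open>n_i^n_i\<close> cancel against \<open>\<lambda>_i^n_i = n_i^n_i / n^n_i\<close>,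
  so the multinomial term is at least \<open>sqrt n / (e^4 \<Prod>_i sqrt (n_i+1))\<close>. By AM-GM the product
  of square roots is at most \<open>((n+4)/4)^2\<close>, so the term is of order \<open>n^(-3/2)\<close>, which beats
  \<open>1/n^2\<close> once \<open>n > 500\<close>.
\<close>

lemma ln_add_one_ge_Pade:
  fixes x :: real
  assumes "x \<ge> 0"
  shows "2 * x / (2 + x) \<le> ln (1 + x)"
proof -
  let ?g = "\<lambda>t. ln (1 + t) - 2 * t / (2 + t)"
  have "?g 0 \<le> ?g x"
  proof (rule deriv_nonneg_imp_mono[where g = ?g and g' = "\<lambda>t. t^2 / ((1 + t) * (2 + t)^2)"])
    fix t :: real assume "t \<in> {0..x}"
    then have t: "t \<ge> 0" by simp
    have "(?g has_real_derivative 1 / (1 + t) - (2 * (2 + t) - 2 * t) / (2 + t)^2) (at t)"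
      using t by (auto intro!: derivative_eq_intros simp: power2_eq_square)
    then show "(?g has_real_derivative t^2 / ((1 + t) * (2 + t)^2)) (at t)"
      by (rule DERIV_cong) (use t in \<open>simp add: divide_simps, simp add: algebra_simps power2_eq_square\<close>)
  qed (use assms in simp_all)
  then show ?thesis by simp
qed

lemma ln_add_one_le_mean:
  fixes x :: real
  assumes "x \<ge> 0"
  shows "ln (1 + x) \<le> x * (2 + x) / (2 * (1 + x))"
proof -
  let ?g = "\<lambda>t. t * (2 + t) / (2 * (1 + t)) - ln (1 + t)"
  have "?g 0 \<le> ?g x"
  proof (rule deriv_nonneg_imp_mono[where g = ?g and g' = "\<lambda>t. t^2 / (2 * (1 + t)^2)"])
    fix t :: real assume "t \<in> {0..x}"
    then have t: "t \<ge> 0" by simp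
    have "(?g has_real_derivative
            ((2 + 2 * t) * (2 * (1 + t)) - t * (2 + t) * 2) / (2 * (1 + t))^2 - 1 / (1 + t)) (at t)"
      using t by (auto intro!: derivative_eq_intros simp: power2_eq_square)
    then show "(?g has_real_derivative t^2 / (2 * (1 + t)^2)) (at t)"
      by (rule DERIV_cong) (use t in \<open>simp add: divide_simps, simp add: algebra_simps power2_eq_square\<close>)
  qed (use assms in simp_all)
  then show ?thesis by simp
qed

lemma ln_Suc_diff_bounds:
  fixes m :: nat
  assumes "m \<ge> 1"
  shows "1 \<le> (m + 1/2) * (ln (real m + 1) - ln m)"
    and "(m + 1/2) * (ln (real m + 1) - ln m) \<le> 1 + 1 / (4 * real m) - 1 / (4 * (real m + 1))"
proof -
  have m: "real m > 0" using assms by simp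
  have "1 + 1 / real m = (real m + 1) / m"
    using m by (simp add: field_simps)
  then have ln_diff: "ln (real m + 1) - ln m = ln (1 + 1 / m)"
    using m by (simp add: ln_div)
  have "1 / (m + 1/2) = 2 * (1 / m) / (2 + 1 / m)"
    using m by (simp add: field_simps)
  also have "\<dots> \<le> ln (real m + 1) - ln m"
    unfolding ln_diff by (rule ln_add_one_ge_Pade) simp
  finally show "1 \<le> (m + 1/2) * (ln (real m + 1) - ln m)"
    using m by (simp add: field_simps)
  have "(m + 1/2) * (ln (real m + 1) - ln m) \<le> (m + 1/2) * ((1 / m) * (2 + 1 / m) / (2 * (1 + 1 / m)))"
    unfolding ln_diff using m by (intro mult_left_mono ln_add_one_le_mean) auto
  also have "\<dots> = 1 + 1 / (4 * real m) - 1 / (4 * (real m + 1))"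
    using m by (simp add: divide_simps) (simp add: algebra_simps power2_eq_square)
  finally show "(m + 1/2) * (ln (real m + 1) - ln m) \<le> 1 + 1 / (4 * real m) - 1 / (4 * (real m + 1))" .
qed

lemma ln_fact_bounds:
  fixes m :: nat
  assumes "m \<ge> 1"
  shows "ln (fact m) \<le> 1 + (m + 1/2) * ln m - m
       \<and> 3/4 + 1 / (4 * real m) + (m + 1/2) * ln m - m \<le> ln (fact m)"
  using assms
proof (induction m rule: nat_induct_at_least)
  case base
  then show ?case by simp
next
  case (Suc m)
  have "(fact (Suc m) :: real) = (real m + 1) * fact m"
    by simp
  then have "ln (fact (Suc m) :: real) = ln (real m + 1) + ln (fact m)"
    by (simp add: ln_mult)
  then show ?case
    using Suc.IH ln_Suc_diff_bounds[OF Suc.hyps] by (simp add: algebra_simps)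
qed

lemma exp_Stirling_exponent:
  fixes m :: nat and c :: real
  assumes "m \<ge> 1"
  shows "exp (c + (m + 1/2) * ln m - m) * exp m = exp c * sqrt m * real m ^ m"
proof -
  have m: "real m > 0" using assms by simp
  have "exp (c + (m + 1/2) * ln m - m) * exp m = exp c * exp (1/2 * ln m) * exp (m * ln m)"
    by (simp add: exp_add exp_diff algebra_simps)
  also have "exp (1/2 * ln m) = sqrt m"
    using m by (simp add: powr_half_sqrt[symmetric] powr_def)
  also have "exp (m * ln m) = real m ^ m"
    using m by (simp add: exp_of_nat_mult)
  finally show ?thesis .
qed

lemma fact_mult_exp_le:
  fixes m :: nat
  shows "fact m * exp m \<le> exp 1 * sqrt (m + 1) * real m ^ m"
proof (cases "m = 0")
  case False
  then have m: "m \<ge> 1" by simp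
  have "fact m \<le> exp (1 + (m + 1/2) * ln m - m)"
    using ln_fact_bounds[OF m] by (metis exp_le_cancel_iff exp_ln fact_gt_zero)
  then have "fact m * exp m \<le> exp (1 + (m + 1/2) * ln m - m) * exp m"
    by simp
  also have "\<dots> \<le> exp 1 * sqrt (m + 1) * real m ^ m"
    unfolding exp_Stirling_exponent[OF m] by (intro mult_mono) auto
  finally show ?thesis .
qed simp

lemma fact_mult_exp_ge:
  fixes m :: nat
  assumes "m \<ge> 1"
  shows "sqrt m * real m ^ m \<le> fact m * exp m"
proof -
  have "sqrt m * real m ^ m = exp ((m + 1/2) * ln m - m) * exp m"
    using exp_Stirling_exponent[OF assms, of 0] by simp
  also have "\<dots> \<le> fact m * exp m"
  proof -
    have "0 \<le> 1 / (4 * real m)" by simp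
    then have "(m + 1/2) * ln m - m \<le> ln (fact m)"
      using ln_fact_bounds[OF assms] by linarith
    then show ?thesis by (simp add: ln_ge_iff[symmetric])
  qed
  finally show ?thesis .
qed

lemma sqrt_le_multinomial_term:
  fixes f :: "'a \<Rightarrow> nat"
  assumes "finite I" and "sum f I \<ge> 1"
  defines "n \<equiv> sum f I"
  shows "sqrt n \<le> exp 1 ^ card I * (\<Prod>i\<in>I. sqrt (f i + 1))
                   * (fact n / (\<Prod>i\<in>I. fact (f i)) * (\<Prod>i\<in>I. (f i / n) ^ f i))"
proof -
  define T where "T = fact n / (\<Prod>i\<in>I. fact (f i)) * (\<Prod>i\<in>I. (f i / n) ^ f i)"
  define P :: real where "P = (\<Prod>i\<in>I. fact (f i))"
  define A where "A = (\<Prod>i\<in>I. real (f i) ^ f i)"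
  define S where "S = (\<Prod>i\<in>I. sqrt (f i + 1))"
  have "n \<ge> 1" using assms(2) unfolding n_def .
  then have n: "real n > 0" by simp
  have P: "P > 0" unfolding P_def by (simp add: prod_pos)
  have A: "A > 0"
    unfolding A_def
  proof (intro prod_pos)
    show "0 < real (f i) ^ f i" for i by (cases "f i") auto
  qed
  have T: "T = fact n / P * (A / real n ^ n)"
    unfolding T_def P_def A_def by (simp add: power_divide prod_dividef power_sum n_def)
  have "P * exp n = (\<Prod>i\<in>I. fact (f i) * exp (f i))"
    unfolding P_def n_def by (simp add: exp_sum[OF assms(1)] prod.distrib)
  also have "\<dots> \<le> (\<Prod>i\<in>I. exp 1 * sqrt (f i + 1) * real (f i) ^ f i)"
    by (intro prod_mono conjI fact_mult_exp_le) simp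
  also have "\<dots> = exp 1 ^ card I * S * A"
    unfolding S_def A_def by (simp add: prod.distrib)
  finally have upper: "P * exp n \<le> exp 1 ^ card I * S * A" .
  have "sqrt n * real n ^ n \<le> fact n * exp n"
    using assms(2) unfolding n_def by (intro fact_mult_exp_ge)
  also have "\<dots> = T * real n ^ n * (P * exp n) / A"
    unfolding T using P A n by (simp add: field_simps)
  also have "\<dots> \<le> T * real n ^ n * (exp 1 ^ card I * S * A) / A"
    using upper A P n unfolding T by (intro divide_right_mono mult_left_mono) auto
  also have "\<dots> = exp 1 ^ card I * S * T * real n ^ n"
    using A by simp
  finally have "sqrt n * real n ^ n \<le> exp 1 ^ card I * S * T * real n ^ n" .
  then have "sqrt n \<le> exp 1 ^ card I * S * T"
    by (rule mult_right_le_imp_le) (use n in simp)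
  then show ?thesis
    unfolding S_def T_def .
qed

lemma sqrt_prod4_le:
  fixes x y z w :: real
  assumes "x \<ge> 0" "y \<ge> 0" "z \<ge> 0" "w \<ge> 0"
  shows "sqrt x * sqrt y * sqrt z * sqrt w \<le> ((x + y + z + w) / 4)^2"
proof -
  have "sqrt x * sqrt y * sqrt z * sqrt w = sqrt (x * y) * sqrt (z * w)"
    by (simp add: real_sqrt_mult)
  also have "\<dots> \<le> (x + y) / 2 * ((z + w) / 2)"
    using assms by (intro mult_mono arith_geo_mean_sqrt) auto
  also have "\<dots> \<le> ((x + y + z + w) / 4)^2"
    using sum_squares_bound[of "(x + y) / 2" "(z + w) / 2"] by (simp add: power2_eq_square field_simps)
  finally show ?thesis .
qed

lemma Stirling_denominator_lt:
  fixes N :: real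
  assumes "N > 500"
  shows "81 * ((N + 4) / 4)^2 < sqrt N * N^2"
proof -
  have "22 \<le> sqrt N"
    using assms by (intro real_le_rsqrt) simp
  have "500 * N \<le> N * N"
    using assms by (intro mult_right_mono) auto
  moreover have "81 * ((N + 4) / 4)^2 = 81 / 16 * (N * N) + 81 / 2 * N + 81"
    by (simp add: power2_eq_square field_simps)
  ultimately have "81 * ((N + 4) / 4)^2 < 22 * (N * N)"
    using assms by linarith
  also have "\<dots> \<le> sqrt N * N^2"
    using \<open>22 \<le> sqrt N\<close> unfolding power2_eq_square by (intro mult_right_mono) auto
  finally show ?thesis .
qed

theorem lemma7:
  fixes n n1 n2 n3 n4 :: nat
  assumes "n > 500"
    and "n1 + n2 + n3 + n4 = n"
  shows "fact n / (fact n1 * fact n2 * fact n3 * fact n4) *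
           ((real n1 / real n) ^ n1 * (real n2 / real n) ^ n2 *
            (real n3 / real n) ^ n3 * (real n4 / real n) ^ n4)
         > 1 / (real n)^2"
  (is "?T > _")
proof -
  define N where "N = real n"
  have N: "N > 500" using assms(1) unfolding N_def by simp
  have sum_eq: "(\<Sum>i<4. [n1, n2, n3, n4] ! i) = n"
    using assms(2) by (simp add: eval_nat_numeral)
  have "1 \<le> n" using assms(1) by simp
  then have "sqrt N \<le> exp 1 ^ 4 * (sqrt (n1 + 1) * sqrt (n2 + 1) * sqrt (n3 + 1) * sqrt (n4 + 1)) * ?T"
    using sqrt_le_multinomial_term[of "{..<4}" "(!) [n1, n2, n3, n4]", unfolded sum_eq]
    unfolding N_def by (simp add: eval_nat_numeral ac_simps)
  also have "\<dots> \<le> 3 ^ 4 * ((N + 4) / 4)^2 * ?T"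
    using sqrt_prod4_le[of "n1 + 1" "n2 + 1" "n3 + 1" "n4 + 1"] assms(2) exp_le
    unfolding N_def by (intro mult_mono power_mono) (auto simp: add_ac)
  finally have "sqrt N \<le> 81 * ((N + 4) / 4)^2 * ?T"
    by simp
  then have "81 * ((N + 4) / 4)^2 * 1 < 81 * ((N + 4) / 4)^2 * (?T * N^2)"
    using Stirling_denominator_lt[OF N] N by (smt (verit) mult.assoc mult_right_mono zero_le_power2)
  then have "1 < ?T * N^2"
    by (rule mult_left_less_imp_less) simp
  then have "1 / N^2 < ?T"
    by (rule pos_divide_less_eq[THEN iffD2, rotated]) (use N in simp)
  then show ?thesis unfolding N_def .
qed

end
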